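(* Let $\ell\ge2$ and $A=\{0,1\}^\ell\setminus\{\mathbf{0},\mathbf{1}\}$. If $\mathbf{v}\in(0,1)^\ell$ satisfies $1<\|\mathbf{v}\|_1<\ell-1$, then there exists $d:A\to(0,1)$ with $\sum_{\mathbf{t}\in A}d(\mathbf{t})=1$ such that $\mathbf{v}=\sum_{\mathbf{t}\in A}d(\mathbf{t})\,\mathbf{t}$.
   Context: $\mathbf{0}$ and $\mathbf{1}$ are the all-zeros and all-ones vectors in $\mathbb{R}^\ell$; $\|\cdot\|_1$ is the $L^1$ norm. *)

theory Defs
  imports "HOL-Analysis.Analysis"
begin

definition binvecs_nontriv :: "(real ^ 'n) set" where
  "binvecs_nontriv = {t. \<forall>i. t $ i \<in> {0, 1}} - {0, (\<chi> i. 1)}"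

definition l1norm :: "real ^ 'n \<Rightarrow> real" where
  "l1norm v = (\<Sum>i\<in>UNIV. \<bar>v $ i\<bar>)"

end

theory Submission
  imports Defs
begin

(* The slab P = {x in [0,1]^l. 1 <= sum x <= l - 1} is a compact convex polytope. A point of P with
   a fractional coordinate x_i is not extreme: if some other coordinate x_j is fractional, move along
   e_i - e_j; otherwise sum x = x_i + (integer) is not an integer, both sum constraints are slack,
   and one can move along e_i. So the extreme points of P are 0/1 vectors other than 0 and 1, and by
   Krein-Milman P lies in the convex hull of A. The hypotheses put v in the interior of P; pushing v
   slightly away from the barycentre of A stays in conv A, and mixing the result back with the
   barycentre writes v with strictly positive weights, which are < 1 because |A| >= 2. *)

definition cube_slab :: "int \<Rightarrow> int \<Rightarrow> (real ^ 'n) set" where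
  "cube_slab a b = {x. (\<forall>i. 0 \<le> x $ i \<and> x $ i \<le> 1) \<and>
                        of_int a \<le> (\<Sum>i\<in>UNIV. x $ i) \<and> (\<Sum>i\<in>UNIV. x $ i) \<le> of_int b}"

lemma inner_one_cart: "(1 :: real ^ 'n) \<bullet> x = (\<Sum>i\<in>UNIV. x $ i)"
  by (simp add: inner_vec_def)

lemma cube_slab_eq_box_Int_halfspaces:
  "cube_slab a b = cbox 0 1 \<inter> {x. 1 \<bullet> x \<ge> of_int a} \<inter> {x. 1 \<bullet> x \<le> of_int b}"
  by (auto simp: cube_slab_def mem_box_cart inner_one_cart)

lemma convex_cube_slab: "convex (cube_slab a b)"
  by (simp add: cube_slab_eq_box_Int_halfspaces convex_Int convex_box
      convex_halfspace_ge convex_halfspace_le)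

lemma compact_cube_slab: "compact (cube_slab a b)"
  by (simp add: cube_slab_eq_box_Int_halfspaces compact_Int_closed closed_Int
      closed_halfspace_ge closed_halfspace_le)

lemma interior_cube_slabI:
  fixes x :: "real ^ 'n"
  assumes "\<forall>i. 0 < x $ i \<and> x $ i < 1"
    and "of_int a < (\<Sum>i\<in>UNIV. x $ i)" "(\<Sum>i\<in>UNIV. x $ i) < of_int b"
  shows "x \<in> interior (cube_slab a b)"
proof (rule interiorI)
  let ?U = "box 0 1 \<inter> {y. 1 \<bullet> y > of_int a} \<inter> {y. 1 \<bullet> y < of_int b}"
  show "open ?U"
    by (intro open_Int open_box open_halfspace_gt open_halfspace_lt)
  show "x \<in> ?U"
    using assms by (simp add: mem_box_cart inner_one_cart)
  show "?U \<subseteq> cube_slab a b"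
    by (auto simp: cube_slab_def mem_box_cart inner_one_cart less_imp_le)
qed

lemma not_extreme_point_of_midpoint:
  fixes x y :: "'a::real_vector"
  assumes "x + y \<in> S" "x - y \<in> S" "y \<noteq> 0"
  shows "\<not> x extreme_point_of S"
proof
  assume "x extreme_point_of S"
  moreover have "x = midpoint (x + y) (x - y)"
    by (simp add: midpoint_def scaleR_2 [symmetric])
  moreover have "x + y \<noteq> x - y"
    using \<open>y \<noteq> 0\<close>
    by (metis add_left_cancel diff_conv_add_uminus eq_neg_iff_add_eq_0 scaleR_2 scaleR_eq_0_iff
        zero_neq_numeral)
  ultimately show False
    using assms midpoint_in_open_segment unfolding extreme_point_of_def by metis
qed

lemma extreme_point_of_cube_slab_binary:
  fixes x :: "real ^ 'n"
  assumes "x extreme_point_of cube_slab a b"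
  shows "x $ i \<in> {0, 1}"
proof (rule ccontr)
  have x: "x \<in> cube_slab a b"
    using assms extreme_point_of_def by blast
  then have x01: "0 \<le> x $ k" "x $ k \<le> 1"
    and sum_x: "of_int a \<le> 1 \<bullet> x" "1 \<bullet> x \<le> of_int b" for k
    by (auto simp: cube_slab_def inner_one_cart)
  assume "x $ i \<notin> {0, 1}"
  with x01 have i: "0 < x $ i" "x $ i < 1"
    by (auto simp: less_le)
  have slab_iff: "z \<in> cube_slab a b \<longleftrightarrow>
      (\<forall>k. 0 \<le> z $ k \<and> z $ k \<le> 1) \<and> of_int a \<le> 1 \<bullet> z \<and> 1 \<bullet> z \<le> of_int b"
    for z :: "real ^ 'n"
    by (simp add: cube_slab_def inner_one_cart)
  consider (two) j where "j \<noteq> i" "0 < x $ j" "x $ j < 1"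
    | (one) "\<forall>j. j \<noteq> i \<longrightarrow> x $ j \<in> {0, 1}"
    using x01 by (force simp: less_le)
  then show False
  proof cases
    case two
    define \<delta> where "\<delta> = min (min (x $ i) (1 - x $ i)) (min (x $ j) (1 - x $ j))"
    have \<delta>: "0 < \<delta>" "\<delta> \<le> x $ i" "\<delta> \<le> 1 - x $ i" "\<delta> \<le> x $ j" "\<delta> \<le> 1 - x $ j"
      using i two unfolding \<delta>_def by auto
    define y :: "real ^ 'n" where "y = \<delta> *\<^sub>R (axis i 1 - axis j 1)"
    have y_nth: "y $ k = (if k = i then \<delta> else if k = j then - \<delta> else 0)" for k
      using two by (simp add: y_def axis_def)
    have "1 \<bullet> y = 0"
      by (simp add: y_def inner_diff_right inner_axis)
    then have "x + y \<in> cube_slab a b" "x - y \<in> cube_slab a b"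
      using x01 sum_x \<delta> y_nth unfolding slab_iff by (auto simp: inner_add_right inner_diff_right)
    moreover have "y \<noteq> 0"
      using \<delta> y_nth[of i] by auto
    ultimately show False
      using assms not_extreme_point_of_midpoint by blast
  next
    case one
    have "(\<Sum>k\<in>UNIV - {i}. x $ k) \<in> \<int>"
      using one by (intro Ints_sum) auto
    moreover have "1 \<bullet> x = x $ i + (\<Sum>k\<in>UNIV - {i}. x $ k)"
      by (simp add: inner_one_cart sum.remove)
    ultimately have "1 \<bullet> x \<in> \<int> \<Longrightarrow> x $ i \<in> \<int>"
      by (metis Ints_diff add_diff_cancel_right')
    then have "1 \<bullet> x \<notin> \<int>"
      using i by (auto elim!: Ints_cases)
    then have sum_x': "of_int a < 1 \<bullet> x" "1 \<bullet> x < of_int b"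
      using sum_x by (metis Ints_of_int less_le)+
    define \<delta> where
      "\<delta> = min (min (x $ i) (1 - x $ i)) (min (1 \<bullet> x - of_int a) (of_int b - 1 \<bullet> x))"
    have \<delta>: "0 < \<delta>" "\<delta> \<le> x $ i" "\<delta> \<le> 1 - x $ i"
      "\<delta> \<le> 1 \<bullet> x - of_int a" "\<delta> \<le> of_int b - 1 \<bullet> x"
      using i sum_x' unfolding \<delta>_def by auto
    define y :: "real ^ 'n" where "y = \<delta> *\<^sub>R axis i 1"
    have y_nth: "y $ k = (if k = i then \<delta> else 0)" for k
      by (simp add: y_def axis_def)
    have "1 \<bullet> y = \<delta>"
      by (simp add: y_def inner_axis)
    then have "x + y \<in> cube_slab a b" "x - y \<in> cube_slab a b"
      using x01 \<delta> y_nth unfolding slab_iff by (auto simp: inner_add_right inner_diff_right)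
    moreover have "y \<noteq> 0"
      using \<delta> by (simp add: y_def)
    ultimately show False
      using assms not_extreme_point_of_midpoint by blast
  qed
qed

lemma cube_slab_subset_convex_hull_binary:
  "cube_slab a b \<subseteq> convex hull {t \<in> cube_slab a b. \<forall>i. t $ i \<in> {0, 1}}"
proof -
  have "{x. x extreme_point_of cube_slab a b} \<subseteq> {t \<in> cube_slab a b. \<forall>i. t $ i \<in> {0, 1}}"
    using extreme_point_of_cube_slab_binary extreme_point_of_def by blast
  then show ?thesis
    using Krein_Milman_Minkowski[OF compact_cube_slab convex_cube_slab] hull_mono by blast
qed

lemma binary_cube_slab_subset_binvecs_nontriv:
  "{t \<in> cube_slab 1 (int CARD('n) - 1). \<forall>i. t $ i \<in> {0, 1}}
     \<subseteq> (binvecs_nontriv :: (real ^ 'n) set)"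
  by (auto simp: cube_slab_def binvecs_nontriv_def)

lemma card_ge_2_ex_other:
  assumes "finite S" "2 \<le> card S" "x \<in> S"
  shows "\<exists>y\<in>S. y \<noteq> x"
proof -
  have "card (S - {x}) > 0"
    using assms by (simp add: card_Diff_singleton)
  then show ?thesis
    by (auto simp: card_gt_0_iff)
qed

lemma finite_vec_nth_in:
  assumes "finite A"
  shows "finite {x :: 'a ^ 'n. \<forall>i. x $ i \<in> A}"
proof (rule finite_subset)
  show "{x :: 'a ^ 'n. \<forall>i. x $ i \<in> A} \<subseteq> vec_lambda ` PiE UNIV (\<lambda>_. A)"
    by (auto simp: image_iff intro!: bexI[of _ "vec_nth _"])
qed (use assms in \<open>simp add: finite_PiE\<close>)

lemma finite_binvecs_nontriv: "finite binvecs_nontriv"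
  using finite_vec_nth_in[of "{0, 1}"]
  by (rule finite_subset[rotated]) (auto simp: binvecs_nontriv_def)

lemma axis_in_binvecs_nontriv:
  assumes "j \<noteq> i"
  shows "axis i 1 \<in> binvecs_nontriv"
  using assms by (auto simp: binvecs_nontriv_def axis_def vec_eq_iff)

lemma card_binvecs_nontriv_ge_2:
  assumes "CARD('n) \<ge> 2"
  shows "card (binvecs_nontriv :: (real ^ 'n) set) \<ge> 2"
proof -
  fix i :: 'n
  obtain j where "j \<noteq> i"
    using card_ge_2_ex_other[of UNIV i] assms by auto
  then have "{axis i 1, axis j 1} \<subseteq> (binvecs_nontriv :: (real ^ 'n) set)"
    using axis_in_binvecs_nontriv[of j i] axis_in_binvecs_nontriv[of i j] by auto
  moreover have "card {axis i 1, axis j 1 :: real ^ 'n} = 2"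
    using \<open>j \<noteq> i\<close> by (simp add: axis_eq_axis)
  ultimately show ?thesis
    by (metis card_mono finite_binvecs_nontriv)
qed

lemma interior_convex_hull_finite_pos_weights:
  fixes S :: "'a::real_normed_vector set"
  assumes "finite S" and v: "v \<in> interior (convex hull S)"
  shows "\<exists>u. (\<forall>x\<in>S. 0 < u x) \<and> sum u S = 1 \<and> (\<Sum>x\<in>S. u x *\<^sub>R x) = v"
proof -
  have "S \<noteq> {}"
    using v by auto
  then have "card S > 0"
    using \<open>finite S\<close> by (simp add: card_gt_0_iff)
  define c where "c = (1 / card S) *\<^sub>R (\<Sum>x\<in>S. x)"
  obtain r where "r > 0" and r: "ball v r \<subseteq> convex hull S"
    using v by (meson mem_interior)
  define e where "e = r / (norm (v - c) + 1)"
  have "e > 0"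
    using \<open>r > 0\<close> by (simp add: e_def add_nonneg_pos)
  have "e * norm (v - c) < e * (norm (v - c) + 1)"
    using \<open>e > 0\<close> by simp
  also have "\<dots> = r"
    by (simp add: e_def add_nonneg_eq_0_iff)
  finally have "e * norm (v - c) < r" .
  then have "v + e *\<^sub>R (v - c) \<in> convex hull S"
    using r \<open>e > 0\<close> by (auto simp: dist_norm)
  then obtain w where w: "\<forall>x\<in>S. 0 \<le> w x" "sum w S = 1"
      "(\<Sum>x\<in>S. w x *\<^sub>R x) = v + e *\<^sub>R (v - c)"
    using convex_hull_finite[OF \<open>finite S\<close>] by auto
  define u where "u x = (w x + e / card S) / (1 + e)" for x
  have "\<forall>x\<in>S. 0 < u x"
    using w(1) \<open>e > 0\<close> \<open>card S > 0\<close> by (simp add: u_def add_nonneg_pos)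
  moreover have "sum u S = 1"
    using w(2) \<open>e > 0\<close> \<open>card S > 0\<close>
    by (simp add: u_def sum_divide_distrib [symmetric] sum.distrib)
  moreover have "(\<Sum>x\<in>S. u x *\<^sub>R x) = v"
  proof -
    have "u x *\<^sub>R x = (1 / (1 + e)) *\<^sub>R (w x *\<^sub>R x + (e / card S) *\<^sub>R x)" for x
      by (simp add: u_def flip: scaleR_add_left)
    then have "(\<Sum>x\<in>S. u x *\<^sub>R x) = (1 / (1 + e)) *\<^sub>R ((\<Sum>x\<in>S. w x *\<^sub>R x) + e *\<^sub>R c)"
      by (simp add: c_def sum.distrib flip: scaleR_sum_right)
    also have "\<dots> = (1 / (1 + e)) *\<^sub>R ((v + e *\<^sub>R (v - c)) + e *\<^sub>R c)"
      by (simp only: w(3))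
    also have "\<dots> = v"
      using \<open>e > 0\<close> by (simp add: algebra_simps flip: scaleR_add_left add_divide_distrib)
    finally show ?thesis .
  qed
  ultimately show ?thesis
    by (intro exI[of _ u]) simp
qed

lemma pos_weight_less_one:
  assumes "finite S" "card S \<ge> 2" "\<forall>x\<in>S. 0 < u x" "sum u S = (1 :: real)" "x \<in> S"
  shows "u x < 1"
proof -
  obtain y where "y \<in> S" "y \<noteq> x"
    using card_ge_2_ex_other[OF assms(1,2,5)] by blast
  have "u x + u y = sum u {x, y}"
    using \<open>y \<noteq> x\<close> by simp
  also have "\<dots> \<le> sum u S"
    using assms \<open>y \<in> S\<close> by (intro sum_mono2) auto
  finally show ?thesis
    using assms(3,4) \<open>y \<in> S\<close> by fastforce
qed

theorem lemma14:
  fixes v :: "real ^ 'n"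
  assumes "CARD('n) \<ge> 2"
    and "\<forall>i. 0 < v $ i \<and> v $ i < 1"
    and "1 < l1norm v" and "l1norm v < real CARD('n) - 1"
  shows "\<exists>d :: real ^ 'n \<Rightarrow> real.
           (\<forall>t\<in>binvecs_nontriv. 0 < d t \<and> d t < 1) \<and>
           (\<Sum>t\<in>binvecs_nontriv. d t) = 1 \<and>
           v = (\<Sum>t\<in>binvecs_nontriv. d t *\<^sub>R t)"
proof -
  have "l1norm v = (\<Sum>i\<in>UNIV. v $ i)"
    using assms(2) by (simp add: l1norm_def less_imp_le)
  then have "v \<in> interior (cube_slab 1 (int CARD('n) - 1))"
    using assms(2-4) by (intro interior_cube_slabI) auto
  also have "\<dots> \<subseteq> interior (convex hull binvecs_nontriv)"
    using cube_slab_subset_convex_hull_binary binary_cube_slab_subset_binvecs_nontriv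
    by (meson hull_mono interior_mono subset_trans)
  finally obtain d where pos: "\<forall>t\<in>binvecs_nontriv. 0 < d t"
      and sum1: "sum d binvecs_nontriv = 1" and comb: "(\<Sum>t\<in>binvecs_nontriv. d t *\<^sub>R t) = v"
    using interior_convex_hull_finite_pos_weights[OF finite_binvecs_nontriv] by blast
  have "d t < 1" if "t \<in> binvecs_nontriv" for t
    using pos_weight_less_one[OF finite_binvecs_nontriv card_binvecs_nontriv_ge_2[OF assms(1)]
        pos sum1 that] .
  then show ?thesis
    using pos sum1 comb by (intro exI[of _ d]) auto
qed

end
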